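(* Let $\mu\in\mathcal{P}(\mathbb{R}^{dT})$, $a\in[0,1)$, $b>0$, $c>0$ and $r\ge0$. Then there exists $C>0$ such that for all $N\in\mathbb{N}$ and $t=1,\dots,T-1$, \[\sum_{G\in\hat\Phi^N_t}(\Vert G\Vert^r+1)^b(\mathrm{diam}(G)+1)^c\mu(G)^{1-a}\le CN^{\frac{ta}T}\sum_{j\ge0}2^{j(rb+dta)}\mu(\mathcal{A}^t_j)^{1-a},\] \[\sum_{G\in\check\Phi^N_t}(\Vert G\Vert^r+1)^b(\mathrm{diam}(G)+1)^c\mu(G)^{1-a}\le CN^{\frac{ta}T}\sum_{j\ge0}2^{j(rb+c)}\mu(\mathcal{A}^t_j)^{1-a}.\]
   Context: Fix integers $d\ge1$, $T\ge2$. $\mathbb{R}^{dt}$ carries the norm $\Vert x_{1:t}\Vert=\sum_{s\le t}\Vert x_s\Vert_{\mathbb{R}^d}$; for $G\subseteq\mathbb{R}^{dt}$, $\Vert G\Vert=\sup_{x\in G}\Vert x\Vert$ and $\mathrm{diam}(G)=\sup_{x,y\in G}\Vert x-y\Vert$. For $\mu\in\mathcal{P}(\mathbb{R}^{dT})$ and Borel $G\subseteq\mathbb{R}^{dt}$, $\mu(G)$ means $\mu_{1:t}(G)$ where $\mu_{1:t}$ is the law of the first $t$ coordinates. Let $\Delta_N=N^{-1/(dT)}$, $m=\lceil1/\Delta_N\rceil$, $\mathcal{A}^t_0=[-1,1]^{dt}$ and $\mathcal{A}^t_j=[-2^j,2^j]^{dt}\setminus[-2^{j-1},2^{j-1}]^{dt}$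 for $j\ge1$. $\hat\Phi^N_t=\{[0,\frac1m]^{dt}+\frac1m\mathbf z:\mathbf z\in\mathbb{Z}^{dt}\}$ (its cubes lying in $\mathcal{A}^t_j$ are grouped by $j$), and $\check\Phi^N_t=\bigcup_{j\ge0}\{[0,\frac{2^{j-1}}m]^{dt}+\frac{2^{j-1}}m\mathbf z\ \text{contained in (the closure of)}\ \mathcal{A}^t_j:\mathbf z\in\mathbb{Z}^{dt}\}$. *)

theory Defs
  imports "HOL-Probability.Probability"
begin

text \<open>A point of R^(dt) is represented as a block vector x_{1:t}: a function
  x :: nat => real^'d, extensional on the block indices {..<t}
  (block s < t corresponds to the paper's x_{s+1}); d = CARD('d).\<close>

definition Rdt :: "nat \<Rightarrow> (nat \<Rightarrow> real^'d) set" where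
  "Rdt t = PiE {..<t} (\<lambda>_. UNIV)"

definition tnorm :: "nat \<Rightarrow> (nat \<Rightarrow> real^'d) \<Rightarrow> real" where
  "tnorm t x = (\<Sum>s<t. norm (x s))"

definition setnorm :: "nat \<Rightarrow> (nat \<Rightarrow> real^'d) set \<Rightarrow> real" where
  "setnorm t G = (SUP x\<in>G. tnorm t x)"

definition setdiam :: "nat \<Rightarrow> (nat \<Rightarrow> real^'d) set \<Rightarrow> real" where
  "setdiam t G = (SUP p\<in>G \<times> G. tnorm t (\<lambda>s. fst p s - snd p s))"

text \<open>Law of the first t blocks and mu(G) := mu_{1:t}(G).\<close>
definition marg :: "(nat \<Rightarrow> real^'d) measure \<Rightarrow> nat \<Rightarrow> (nat \<Rightarrow> real^'d) set \<Rightarrow> real" where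
  "marg \<mu> t G = measure (distr \<mu> (PiM {..<t} (\<lambda>_. borel)) (\<lambda>x. restrict x {..<t})) G"

definition DeltaN :: "nat \<Rightarrow> nat \<Rightarrow> nat \<Rightarrow> real" where
  "DeltaN d T N = real N powr (- 1 / real (d * T))"

definition gridm :: "nat \<Rightarrow> nat \<Rightarrow> nat \<Rightarrow> nat" where
  "gridm d T N = nat \<lceil>1 / DeltaN d T N\<rceil>"

definition cube :: "nat \<Rightarrow> real \<Rightarrow> (nat \<Rightarrow> int^'d) \<Rightarrow> (nat \<Rightarrow> real^'d) set" where
  "cube t h z = {x \<in> Rdt t. \<forall>s<t. \<forall>i.
       h * of_int (z s $ i) \<le> x s $ i \<and> x s $ i \<le> h * (of_int (z s $ i) + 1)}"

definition cbox_t :: "nat \<Rightarrow> real \<Rightarrow> (nat \<Rightarrow> real^'d) set" where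
  "cbox_t t R = {x \<in> Rdt t. \<forall>s<t. \<forall>i. \<bar>x s $ i\<bar> \<le> R}"

definition obox_t :: "nat \<Rightarrow> real \<Rightarrow> (nat \<Rightarrow> real^'d) set" where
  "obox_t t R = {x \<in> Rdt t. \<forall>s<t. \<forall>i. \<bar>x s $ i\<bar> < R}"

definition Ann :: "nat \<Rightarrow> nat \<Rightarrow> (nat \<Rightarrow> real^'d) set" where
  "Ann t j = (if j = 0 then cbox_t t 1 else cbox_t t (2^j) - cbox_t t (2^(j-1)))"

text \<open>Closure of A^t_j (for t >= 1), written out explicitly.\<close>
definition AnnCl :: "nat \<Rightarrow> nat \<Rightarrow> (nat \<Rightarrow> real^'d) set" where
  "AnnCl t j = (if j = 0 then cbox_t t 1 else cbox_t t (2^j) - obox_t t (2^(j-1)))"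

definition hatPhi :: "nat \<Rightarrow> nat \<Rightarrow> nat \<Rightarrow> (nat \<Rightarrow> real^'d) set set" where
  "hatPhi T N t = {cube t (1 / real (gridm CARD('d) T N)) z | z. True}"

definition checkPhi :: "nat \<Rightarrow> nat \<Rightarrow> nat \<Rightarrow> (nat \<Rightarrow> real^'d) set set" where
  "checkPhi T N t = (\<Union>j. {cube t (2^j / 2 / real (gridm CARD('d) T N)) z | z.
      cube t (2^j / 2 / real (gridm CARD('d) T N)) z \<subseteq> AnnCl t j})"

end

theory Submission
  imports Defs
begin

text \<open>
  Every cube G is split along the annuli: since x powr (1 - a) is subadditive,
  mu(G) powr (1 - a) <= sum_j mu(G Int A_j) powr (1 - a), and only the cubes meeting A_j
  contribute to the j-th term. Such a cube lies in the box [-2^(j+1), 2^(j+1)]^(dt). This bounds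
  its weight by a constant times 2^(j r b) (times 2^(j c) for the cubes of checkPhi, whose side in
  layer j is 2^(j-1)/m and which meet A_j only from the layers j and j + 1), and it bounds the
  number of such cubes by (4 m 2^j)^(dt) for hatPhi and by (4 m)^(dt) per layer for checkPhi.
  For n cubes, Hoelder's inequality gives sum_G x_G powr (1 - a) <= n powr a (sum_G x_G) powr (1 - a),
  and since every point lies in at most 2^(dt) cubes of one grid, sum_G mu(G Int A_j) <= 2^(dt) mu(A_j).
  Finally m <= 2 N^(1/(dT)), hence m^(dta) <= 2^(dta) N^(ta/T).
\<close>

section \<open>Elementary inequalities\<close>

lemma powr_le_tangent:
  fixes p u :: real
  assumes "0 < p" "p \<le> 1" "0 \<le> u"
  shows "u powr p \<le> p * u + (1 - p)"
proof (cases "u = 0 \<or> p = 1")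
  case True
  then show ?thesis using assms by auto
next
  case False
  then have "u powr p * 1 powr (1 - p) \<le> p * u + (1 - p) * 1"
    using assms by (intro Youngs_inequality_0) auto
  then show ?thesis by simp
qed

lemma sum_powr_le_card_powr_sum:
  fixes x :: "'a \<Rightarrow> real"
  assumes "finite I" and nonneg: "\<And>i. i \<in> I \<Longrightarrow> 0 \<le> x i" and "0 < p" "p \<le> 1"
  shows "(\<Sum>i\<in>I. x i powr p) \<le> real (card I) powr (1 - p) * (\<Sum>i\<in>I. x i) powr p"
proof (cases "(\<Sum>i\<in>I. x i) = 0")
  case True
  then have "\<forall>i\<in>I. x i = 0" using sum_nonneg_eq_0_iff[OF \<open>finite I\<close>] nonneg by blast
  then show ?thesis by simp
next
  case False
  define S where "S = (\<Sum>i\<in>I. x i)"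
  define n where "n = real (card I)"
  define l where "l = S / n"
  have "S > 0" using False nonneg unfolding S_def by (metis order_less_le sum_nonneg)
  moreover have "n > 0" using False \<open>finite I\<close> unfolding n_def by (auto simp: card_gt_0_iff)
  ultimately have "l > 0" unfolding l_def by simp
  \<comment> \<open>Tangent line of the concave function \<open>u \<mapsto> u powr p\<close> at the mean \<open>l\<close>.\<close>
  have "x i powr p \<le> l powr p * (p * (x i / l) + (1 - p))" if "i \<in> I" for i
  proof -
    have "x i powr p = l powr p * (x i / l) powr p"
      using \<open>l > 0\<close> nonneg[OF that] by (simp add: powr_divide)
    also have "\<dots> \<le> l powr p * (p * (x i / l) + (1 - p))"
      using powr_le_tangent[of p "x i / l"] assms nonneg[OF that] \<open>l > 0\<close>
      by (intro mult_left_mono) auto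
    finally show ?thesis .
  qed
  then have "(\<Sum>i\<in>I. x i powr p) \<le> (\<Sum>i\<in>I. (l powr p * p / l) * x i + l powr p * (1 - p))"
    by (intro sum_mono) (simp add: algebra_simps)
  also have "\<dots> = (l powr p * p / l) * S + n * (l powr p * (1 - p))"
    by (simp add: sum.distrib sum_distrib_left S_def n_def)
  also have "\<dots> = n powr (1 - p) * S powr p"
    using \<open>S > 0\<close> \<open>n > 0\<close> unfolding l_def by (simp add: powr_divide powr_diff field_simps)
  finally show ?thesis unfolding S_def n_def .
qed

lemma powr_sum_le_sum_powr:
  fixes x :: "'a \<Rightarrow> real"
  assumes "finite I" and nonneg: "\<And>i. i \<in> I \<Longrightarrow> 0 \<le> x i" and "0 < p" "p \<le> 1"
  shows "(\<Sum>i\<in>I. x i) powr p \<le> (\<Sum>i\<in>I. x i powr p)"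
proof (cases "(\<Sum>i\<in>I. x i) = 0")
  case True
  then show ?thesis using nonneg by (simp add: sum_nonneg)
next
  case False
  define S where "S = (\<Sum>i\<in>I. x i)"
  have "S > 0" using False nonneg unfolding S_def by (metis order_less_le sum_nonneg)
  have "S powr p * (x i / S) \<le> x i powr p" if "i \<in> I" for i
  proof -
    have "x i \<le> S" unfolding S_def using assms that by (intro member_le_sum) auto
    then have "x i / S \<le> (x i / S) powr p"
      using powr_mono'[of p 1 "x i / S"] assms nonneg[OF that] \<open>S > 0\<close> by auto
    then have "S powr p * (x i / S) \<le> S powr p * (x i / S) powr p"
      by (intro mult_left_mono) auto
    also have "\<dots> = x i powr p" using \<open>S > 0\<close> nonneg[OF that] by (simp add: powr_divide)
    finally show ?thesis .
  qed
  then have "(\<Sum>i\<in>I. S powr p * (x i / S)) \<le> (\<Sum>i\<in>I. x i powr p)" by (rule sum_mono)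
  moreover have "(\<Sum>i\<in>I. S powr p * (x i / S)) = S powr p"
    using \<open>S > 0\<close> by (simp add: S_def flip: sum_distrib_left sum_divide_distrib)
  ultimately show ?thesis unfolding S_def by simp
qed

lemma realpow_powr: "(0::real) < x \<Longrightarrow> (x ^ n) powr e = x powr (real n * e)"
  by (simp add: powr_realpow[symmetric] powr_powr)

lemma sum_measure_Int_le_overlap:
  assumes "finite_measure M" "finite F" "F \<subseteq> sets M" "A \<in> sets M"
    and overlap: "\<And>x. x \<in> A \<Longrightarrow> card {G\<in>F. x \<in> G} \<le> K"
  shows "(\<Sum>G\<in>F. measure M (G \<inter> A)) \<le> K * measure M A"
proof -
  interpret finite_measure M by fact
  have meas: "G \<inter> A \<in> sets M" if "G \<in> F" for G
    using assms that by auto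
  have "(\<Sum>G\<in>F. measure M (G \<inter> A)) = (\<Sum>G\<in>F. LINT x|M. indicator (G \<inter> A) x)"
    using meas by simp
  also have "\<dots> = (LINT x|M. (\<Sum>G\<in>F. indicator (G \<inter> A) x))"
    using meas by (intro Bochner_Integration.integral_sum[symmetric] integrable_real_indicator)
      (auto simp: less_top[symmetric])
  also have "\<dots> \<le> (LINT x|M. real K * indicator A x)"
  proof (intro integral_mono)
    fix x
    have "(\<Sum>G\<in>F. indicator (G \<inter> A) x) = indicator A x * real (card {G\<in>F. x \<in> G})"
      using \<open>finite F\<close> by (simp add: indicator_def sum.If_cases Int_def)
    also have "\<dots> \<le> real K * indicator A x"
      using overlap by (simp add: indicator_def)
    finally show "(\<Sum>G\<in>F. indicator (G \<inter> A) x) \<le> real K * indicator A x" .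
  qed (use meas assms in \<open>auto intro!: integrable_real_indicator simp: less_top[symmetric]\<close>)
  also have "\<dots> = K * measure M A"
    using \<open>A \<in> sets M\<close> by simp
  finally show ?thesis .
qed

section \<open>Grid cubes\<close>

lemma cube_PiE:
  "cube t h z = PiE {..<t} (\<lambda>s. cbox (\<chi> k. h * of_int (z s $ k)) (\<chi> k. h * (of_int (z s $ k) + 1)))"
  unfolding cube_def Rdt_def by (rule set_eqI) (simp add: PiE_iff mem_box_cart Ball_def conj_commute)

lemma cbox_t_PiE: "cbox_t t R = PiE {..<t} (\<lambda>s. cbox (\<chi> k. - R) (\<chi> k. R))"
  unfolding cbox_t_def Rdt_def
  by (rule set_eqI) (simp add: PiE_iff mem_box_cart abs_le_iff minus_le_iff Ball_def conj_commute)

lemma sets_cube: "cube t h z \<in> sets (PiM {..<t} (\<lambda>_. borel))"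
  unfolding cube_PiE by (intro sets_PiM_I_finite) auto

lemma sets_cbox_t: "cbox_t t R \<in> sets (PiM {..<t} (\<lambda>_. borel))"
  unfolding cbox_t_PiE by (intro sets_PiM_I_finite) auto

lemma sets_Ann: "Ann t j \<in> sets (PiM {..<t} (\<lambda>_. borel))"
  unfolding Ann_def using sets_cbox_t by auto

lemma cbox_t_mono: "R \<le> R' \<Longrightarrow> cbox_t t R \<subseteq> cbox_t t R'"
  unfolding cbox_t_def by (auto intro: order_trans)

lemma Ann_subset_cbox_t: "Ann t j \<subseteq> cbox_t t (2 ^ j)"
  unfolding Ann_def by auto

lemma AnnCl_subset_cbox_t: "AnnCl t j \<subseteq> cbox_t t (2 ^ j)"
  unfolding AnnCl_def by auto

lemma cube_corners:
  assumes "0 \<le> h"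
  shows "restrict (\<lambda>s. \<chi> k. h * of_int (z s $ k)) {..<t} \<in> cube t h z"
    and "restrict (\<lambda>s. \<chi> k. h * (of_int (z s $ k) + 1)) {..<t} \<in> cube t h z"
  using assms unfolding cube_def Rdt_def by (auto simp: PiE_iff distrib_left)

lemma cube_nonempty: "0 \<le> h \<Longrightarrow> cube t h z \<noteq> {}"
  using cube_corners(1) by blast

lemma mem_cubeD:
  "x \<in> cube t h z \<Longrightarrow> s < t \<Longrightarrow> h * of_int (z s $ k) \<le> x s $ k \<and> x s $ k \<le> h * (of_int (z s $ k) + 1)"
  unfolding cube_def by auto

lemma finite_card_cubes_with_indices:
  fixes F :: "(nat \<Rightarrow> real^'d) set set" and S :: "nat \<Rightarrow> 'd \<Rightarrow> int set"
  assumes F: "\<And>G. G \<in> F \<Longrightarrow> \<exists>z. G = cube t h z \<and> (\<forall>s<t. \<forall>k. z s $ k \<in> S s k)"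
    and "\<And>s k. finite (S s k)" and "\<And>s k. card (S s k) \<le> B"
  shows "finite F \<and> card F \<le> B ^ (CARD('d) * t)"
proof -
  let ?I = "{..<t} \<times> (UNIV :: 'd set)"
  let ?P = "PiE ?I (\<lambda>(s, k). S s k)"
  let ?cube_of = "\<lambda>f. cube t h (\<lambda>s. \<chi> k. f (s, k))"
  have "F \<subseteq> ?cube_of ` ?P"
  proof
    fix G assume "G \<in> F"
    then obtain z where z: "G = cube t h z" "\<forall>s<t. \<forall>k. z s $ k \<in> S s k" using F by blast
    have "G = ?cube_of (restrict (\<lambda>(s, k). z s $ k) ?I)"
      unfolding z(1) cube_def by auto
    moreover have "restrict (\<lambda>(s, k). z s $ k) ?I \<in> ?P" using z(2) by auto
    ultimately show "G \<in> ?cube_of ` ?P" by blast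
  qed
  moreover have "finite ?P" using assms by (intro finite_PiE) auto
  moreover have "card ?P \<le> B ^ (CARD('d) * t)"
  proof -
    have "card ?P = (\<Prod>i\<in>?I. card (case i of (s, k) \<Rightarrow> S s k))"
      by (rule card_PiE) simp
    also have "\<dots> \<le> (\<Prod>i\<in>?I. B)"
      using assms by (intro prod_mono) (auto split: prod.split)
    also have "\<dots> = B ^ (CARD('d) * t)"
      by (simp add: card_cartesian_product mult.commute)
    finally show ?thesis .
  qed
  ultimately show ?thesis
    by (meson card_image_le finite_imageI finite_subset card_mono order_trans)
qed

lemma card_cubes_containing_le:
  fixes F :: "(nat \<Rightarrow> real^'d) set set"
  assumes "0 < h" and "\<And>G. G \<in> F \<Longrightarrow> \<exists>z. G = cube t h z"
  shows "card {G\<in>F. x \<in> G} \<le> 2 ^ (CARD('d) * t)"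
proof -
  define S where "S s k = {\<lfloor>x s $ k / h\<rfloor> - 1, \<lfloor>x s $ k / h\<rfloor>}" for s k
  have "finite {G\<in>F. x \<in> G} \<and> card {G\<in>F. x \<in> G} \<le> 2 ^ (CARD('d) * t)"
  proof (rule finite_card_cubes_with_indices[where S = S])
    fix G assume "G \<in> {G\<in>F. x \<in> G}"
    then obtain z where z: "G = cube t h z" "x \<in> G" using assms(2) by blast
    have "z s $ k \<in> S s k" if "s < t" for s k
    proof -
      have "of_int (z s $ k) \<le> x s $ k / h" "x s $ k / h \<le> of_int (z s $ k) + 1"
        using mem_cubeD[of x t h z s k] z that \<open>0 < h\<close> by (auto simp: field_simps)
      then have "z s $ k \<le> \<lfloor>x s $ k / h\<rfloor>" "\<lfloor>x s $ k / h\<rfloor> \<le> z s $ k + 1"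
        by (simp_all add: le_floor_iff floor_le_iff)
      then show ?thesis unfolding S_def by auto
    qed
    then show "\<exists>z. G = cube t h z \<and> (\<forall>s<t. \<forall>k. z s $ k \<in> S s k)" using z by blast
  qed (auto simp: S_def card_insert_if)
  then show ?thesis by simp
qed

lemma card_cubes_in_cbox_t_le:
  fixes F :: "(nat \<Rightarrow> real^'d) set set"
  assumes "0 < h" "0 \<le> R" and F: "\<And>G. G \<in> F \<Longrightarrow> \<exists>z. G = cube t h z \<and> G \<subseteq> cbox_t t R"
  shows "finite F" and "real (card F) \<le> (2 * R / h) ^ (CARD('d) * t)"
proof -
  define q where "q = \<lfloor>R / h\<rfloor>"
  have "finite F \<and> card F \<le> nat (2 * q) ^ (CARD('d) * t)"
  proof (rule finite_card_cubes_with_indices[where S = "\<lambda>_ _. {- q .. q - 1}"])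
    fix G assume "G \<in> F"
    then obtain z where z: "G = cube t h z" "G \<subseteq> cbox_t t R" using F by blast
    have "z s $ k \<in> {- q .. q - 1}" if "s < t" for s k
    proof -
      have "\<bar>h * of_int (z s $ k)\<bar> \<le> R" "\<bar>h * (of_int (z s $ k) + 1)\<bar> \<le> R"
        using cube_corners[of h z t] z \<open>0 < h\<close> that unfolding cbox_t_def by fastforce+
      then have "- (R / h) \<le> of_int (z s $ k)" "of_int (z s $ k + 1) \<le> R / h"
        using \<open>0 < h\<close> by (auto simp: field_simps abs_le_iff)
      then have "\<lceil>- (R / h)\<rceil> \<le> z s $ k" "z s $ k + 1 \<le> q"
        unfolding q_def by (simp_all only: ceiling_le_iff le_floor_iff)
      then show ?thesis unfolding q_def by (simp add: ceiling_minus)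
    qed
    then show "\<exists>z. G = cube t h z \<and> (\<forall>s<t. \<forall>k. z s $ k \<in> {- q .. q - 1})" using z by blast
  qed auto
  then show "finite F" by blast
  have "real (card F) \<le> real (nat (2 * q)) ^ (CARD('d) * t)"
    using \<open>finite F \<and> _\<close> by (metis of_nat_le_iff of_nat_power)
  also have "\<dots> \<le> (2 * R / h) ^ (CARD('d) * t)"
  proof (rule power_mono)
    have "0 \<le> q" "of_int q \<le> R / h"
      using \<open>0 < h\<close> \<open>0 \<le> R\<close> unfolding q_def by simp_all
    then show "real (nat (2 * q)) \<le> 2 * R / h" by (simp add: of_nat_nat)
  qed simp
  finally show "real (card F) \<le> (2 * R / h) ^ (CARD('d) * t)" .
qed

lemma cube_subset_cbox_t_pow2:
  fixes z :: "nat \<Rightarrow> int^'d"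
  shows "\<exists>J. cube t h z \<subseteq> cbox_t t (2 ^ J)"
proof -
  let ?I = "{..<t} \<times> (UNIV :: 'd set)"
  define R where "R = \<bar>h\<bar> * ((\<Sum>(s, k)\<in>?I. \<bar>real_of_int (z s $ k)\<bar>) + 1)"
  obtain J where "R < 2 ^ J" using real_arch_pow[of 2 R] by auto
  have "cube t h z \<subseteq> cbox_t t R"
  proof
    fix x assume x: "x \<in> cube t h z"
    have "\<bar>x s $ k\<bar> \<le> R" if "s < t" for s k
    proof -
      have "\<bar>real_of_int (z s $ k)\<bar> \<le> (\<Sum>(s, k)\<in>?I. \<bar>real_of_int (z s $ k)\<bar>)"
        using member_le_sum[of "(s, k)" ?I "\<lambda>(s, k). \<bar>real_of_int (z s $ k)\<bar>"] that by auto
      moreover have "\<bar>x s $ k\<bar> \<le> \<bar>h\<bar> * (\<bar>real_of_int (z s $ k)\<bar> + 1)"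
      proof -
        have "\<bar>h * real_of_int (z s $ k)\<bar> \<le> \<bar>h\<bar> * (\<bar>real_of_int (z s $ k)\<bar> + 1)"
          "\<bar>h * (real_of_int (z s $ k) + 1)\<bar> \<le> \<bar>h\<bar> * (\<bar>real_of_int (z s $ k)\<bar> + 1)"
          by (simp_all add: abs_mult mult_left_mono abs_triangle_ineq)
        then show ?thesis using mem_cubeD[OF x that, of k] by linarith
      qed
      ultimately show ?thesis
        unfolding R_def by (meson abs_ge_zero add_right_mono mult_left_mono order_trans)
    qed
    then show "x \<in> cbox_t t R" using x unfolding cube_def cbox_t_def by auto
  qed
  also have "\<dots> \<subseteq> cbox_t t (2 ^ J)" using \<open>R < 2 ^ J\<close> by (intro cbox_t_mono) simp
  finally show ?thesis by blast
qed

section \<open>Norm, diameter and weight of a cube\<close>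

lemma tnorm_nonneg: "0 \<le> tnorm t x"
  unfolding tnorm_def by (simp add: sum_nonneg)

lemma tnorm_le:
  fixes x :: "nat \<Rightarrow> real^'d"
  assumes "\<And>s k. s < t \<Longrightarrow> \<bar>x s $ k\<bar> \<le> R"
  shows "tnorm t x \<le> real t * real CARD('d) * R"
proof -
  have "tnorm t x \<le> (\<Sum>s<t. \<Sum>k\<in>UNIV. \<bar>x s $ k\<bar>)"
    unfolding tnorm_def by (intro sum_mono norm_le_l1_cart)
  also have "\<dots> \<le> (\<Sum>s<t. \<Sum>k\<in>(UNIV :: 'd set). R)"
    using assms by (intro sum_mono) auto
  finally show ?thesis by simp
qed

lemma cSUP_nonneg_le:
  fixes f :: "'a \<Rightarrow> real"
  assumes "S \<noteq> {}" and "\<And>x. x \<in> S \<Longrightarrow> 0 \<le> f x \<and> f x \<le> B"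
  shows "0 \<le> (SUP x\<in>S. f x) \<and> (SUP x\<in>S. f x) \<le> B"
proof
  obtain x where "x \<in> S" using assms(1) by blast
  moreover have "bdd_above (f ` S)" using assms(2) by (intro bdd_aboveI2) blast
  ultimately show "0 \<le> (SUP x\<in>S. f x)"
    using assms(2) by (meson cSUP_upper order_trans)
  show "(SUP x\<in>S. f x) \<le> B" using assms by (intro cSUP_least) auto
qed

lemma setnorm_le:
  fixes G :: "(nat \<Rightarrow> real^'d) set"
  assumes "G \<noteq> {}" "G \<subseteq> cbox_t t R"
  shows "0 \<le> setnorm t G \<and> setnorm t G \<le> real t * real CARD('d) * R"
  unfolding setnorm_def using assms
  by (intro cSUP_nonneg_le) (auto simp: cbox_t_def tnorm_nonneg intro!: tnorm_le)

lemma setdiam_cube_le: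
  fixes z :: "nat \<Rightarrow> int^'d"
  assumes "0 \<le> h"
  shows "0 \<le> setdiam t (cube t h z) \<and> setdiam t (cube t h z) \<le> real t * real CARD('d) * h"
  unfolding setdiam_def
proof (intro cSUP_nonneg_le conjI tnorm_nonneg tnorm_le)
  show "cube t h z \<times> cube t h z \<noteq> {}" using cube_nonempty[OF assms] by simp
  fix p s k assume "p \<in> cube t h z \<times> cube t h z" "s < t"
  then show "\<bar>(fst p s - snd p s) $ k\<bar> \<le> h"
    using mem_cubeD[of "fst p" t h z s k] mem_cubeD[of "snd p" t h z s k] by (auto simp: mem_Times_iff abs_le_iff distrib_left)
qed

definition set_weight :: "nat \<Rightarrow> real \<Rightarrow> real \<Rightarrow> real \<Rightarrow> (nat \<Rightarrow> real^'d) set \<Rightarrow> real" where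
  "set_weight t r b c G = (setnorm t G powr r + 1) powr b * (setdiam t G + 1) powr c"

lemma set_weight_nonneg: "0 \<le> set_weight t r b c G"
  unfolding set_weight_def by simp

lemma set_weight_cube_le:
  fixes z :: "nat \<Rightarrow> int^'d"
  assumes "1 \<le> t" "0 \<le> h" "1 \<le> R" "cube t h z \<subseteq> cbox_t t R" "0 \<le> r" "0 \<le> b" "0 \<le> c"
  shows "set_weight t r b c (cube t h z)
    \<le> 2 powr b * (real t * real CARD('d) * R) powr (r * b) * (real t * real CARD('d) * h + 1) powr c"
proof -
  define X where "X = real t * real CARD('d) * R"
  have "1 \<le> real t" "1 \<le> real CARD('d)" using assms(1) by simp_all
  then have "1 * 1 * 1 \<le> X" unfolding X_def using assms(3) by (intro mult_mono) simp_all
  obtain "0 \<le> setnorm t (cube t h z)" "setnorm t (cube t h z) \<le> X"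
    using setnorm_le[OF cube_nonempty[OF assms(2)] assms(4)] unfolding X_def by blast
  then have "setnorm t (cube t h z) powr r \<le> X powr r"
    using assms(5) by (intro powr_mono2)
  moreover have "1 \<le> X powr r"
    using \<open>1 * 1 * 1 \<le> X\<close> assms(5) by (intro ge_one_powr_ge_zero) auto
  ultimately have "setnorm t (cube t h z) powr r + 1 \<le> 2 * X powr r"
    by linarith
  then have "(setnorm t (cube t h z) powr r + 1) powr b \<le> (2 * X powr r) powr b"
    using assms(6) by (intro powr_mono2) auto
  also have "\<dots> = 2 powr b * X powr (r * b)"
    by (simp add: powr_mult powr_powr)
  finally have norm_part: "(setnorm t (cube t h z) powr r + 1) powr b \<le> 2 powr b * X powr (r * b)" .
  have diam_part: "(setdiam t (cube t h z) + 1) powr c \<le> (real t * real CARD('d) * h + 1) powr c"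
    using setdiam_cube_le[OF assms(2), of t z] assms(7) by (intro powr_mono2) auto
  show ?thesis
    unfolding set_weight_def
    by (rule mult_mono[OF norm_part[unfolded X_def] diam_part mult_nonneg_nonneg[OF powr_ge_zero powr_ge_zero] powr_ge_zero])
qed

lemma sum_cubes_Int_powr_le:
  fixes M :: "(nat \<Rightarrow> real^'d) measure" and F :: "(nat \<Rightarrow> real^'d) set set"
  assumes "finite_measure M" "sets M = sets (PiM {..<t} (\<lambda>_. borel))"
    and "finite F" "\<And>G. G \<in> F \<Longrightarrow> \<exists>z. G = cube t h z" "0 < h" "real (card F) \<le> n"
    and "A \<in> sets M" "0 \<le> a" "a < 1"
  shows "(\<Sum>G\<in>F. measure M (G \<inter> A) powr (1 - a))
    \<le> n powr a * (2 ^ (CARD('d) * t) * measure M A) powr (1 - a)"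
proof -
  have "(\<Sum>G\<in>F. measure M (G \<inter> A) powr (1 - a))
      \<le> real (card F) powr (1 - (1 - a)) * (\<Sum>G\<in>F. measure M (G \<inter> A)) powr (1 - a)"
    using assms by (intro sum_powr_le_card_powr_sum) auto
  also have "\<dots> \<le> n powr a * (2 ^ (CARD('d) * t) * measure M A) powr (1 - a)"
  proof (intro mult_mono powr_mono2)
    show "real (card F) powr (1 - (1 - a)) \<le> n powr a"
      using assms by (simp add: powr_mono2)
    show "(\<Sum>G\<in>F. measure M (G \<inter> A)) \<le> 2 ^ (CARD('d) * t) * measure M A"
      using sum_measure_Int_le_overlap[of M F A "2 ^ (CARD('d) * t)"] card_cubes_containing_le[of h F t]
        assms sets_cube by fastforce
  qed (use assms in \<open>auto intro: sum_nonneg\<close>)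
  finally show ?thesis .
qed

lemma sum_weighted_cubes_in_cbox_t_le:
  fixes M :: "(nat \<Rightarrow> real^'d) measure" and F :: "(nat \<Rightarrow> real^'d) set set"
  assumes "finite_measure M" "sets M = sets (PiM {..<t} (\<lambda>_. borel))"
    and F: "finite F" "\<And>G. G \<in> F \<Longrightarrow> \<exists>z. G = cube t h z \<and> G \<subseteq> cbox_t t R"
    and "1 \<le> t" "0 < h" "1 \<le> R" "A \<in> sets M" "0 \<le> a" "a < 1" "0 \<le> r" "0 \<le> b" "0 \<le> c"
  shows "(\<Sum>G\<in>F. set_weight t r b c G * measure M (G \<inter> A) powr (1 - a))
    \<le> 2 powr b * (real t * real CARD('d) * R) powr (r * b) * (real t * real CARD('d) * h + 1) powr c
      * ((2 * R / h) powr (real CARD('d) * real t * a) * (2 ^ (CARD('d) * t) * measure M A) powr (1 - a))"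
proof -
  define W where "W = 2 powr b * (real t * real CARD('d) * R) powr (r * b) * (real t * real CARD('d) * h + 1) powr c"
  have "(\<Sum>G\<in>F. set_weight t r b c G * measure M (G \<inter> A) powr (1 - a))
      \<le> (\<Sum>G\<in>F. W * measure M (G \<inter> A) powr (1 - a))"
  proof (intro sum_mono mult_right_mono)
    fix G assume "G \<in> F"
    then obtain z where "G = cube t h z" "G \<subseteq> cbox_t t R" using F(2) by blast
    then show "set_weight t r b c G \<le> W"
      unfolding W_def using set_weight_cube_le[of t h R z r b c] assms by simp
  qed simp
  also have "\<dots> = W * (\<Sum>G\<in>F. measure M (G \<inter> A) powr (1 - a))"
    by (simp add: sum_distrib_left)
  also have "\<dots> \<le> W * (((2 * R / h) ^ (CARD('d) * t)) powr a * (2 ^ (CARD('d) * t) * measure M A) powr (1 - a))"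
    using assms card_cubes_in_cbox_t_le[of h R F t] unfolding W_def
    by (intro mult_left_mono sum_cubes_Int_powr_le) auto
  also have "((2 * R / h) ^ (CARD('d) * t)) powr a = (2 * R / h) powr (real CARD('d) * real t * a)"
    using assms by (simp add: realpow_powr)
  finally show ?thesis unfolding W_def .
qed

section \<open>Decomposition along the annuli\<close>

lemma measure_Int_cbox_t_pow2_eq_sum_Ann:
  fixes M :: "(nat \<Rightarrow> real^'d) measure"
  assumes "finite_measure M" "sets M = sets (PiM {..<t} (\<lambda>_. borel))" "G \<in> sets M"
  shows "measure M (G \<inter> cbox_t t (2 ^ J)) = (\<Sum>i\<le>J. measure M (G \<inter> Ann t i))"
proof (induction J)
  case 0
  then show ?case by (simp add: Ann_def)
next
  case (Suc J)
  interpret finite_measure M by fact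
  have split: "G \<inter> cbox_t t (2 ^ Suc J) = (G \<inter> cbox_t t (2 ^ J)) \<union> (G \<inter> Ann t (Suc J))"
    using cbox_t_mono[of "2 ^ J" "2 ^ Suc J" t] by (auto simp: Ann_def)
  have "measure M (G \<inter> cbox_t t (2 ^ Suc J))
      = measure M (G \<inter> cbox_t t (2 ^ J)) + measure M (G \<inter> Ann t (Suc J))"
    unfolding split using assms sets_cbox_t sets_Ann by (intro finite_measure_Union) (auto simp: Ann_def)
  then show ?case using Suc by simp
qed

lemma cbox_t_subset_obox_t: "R < R' \<Longrightarrow> cbox_t t R \<subseteq> obox_t t R'"
  unfolding cbox_t_def obox_t_def by (auto intro: le_less_trans)

lemma Ann_Int_AnnCl_nonemptyD:
  assumes "Ann t i \<inter> (AnnCl t j :: (nat \<Rightarrow> real^'d) set) \<noteq> {}"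
  shows "j = i \<or> j = Suc i"
proof -
  obtain y :: "nat \<Rightarrow> real^'d" where y: "y \<in> Ann t i" "y \<in> AnnCl t j" using assms by blast
  have "\<not> j < i"
  proof
    assume "j < i"
    then have "cbox_t t (2 ^ j) \<subseteq> cbox_t t (2 ^ (i - 1))"
      by (intro cbox_t_mono power_increasing) auto
    then show False using y \<open>j < i\<close> AnnCl_subset_cbox_t[of t j] unfolding Ann_def by auto
  qed
  moreover have "\<not> Suc i < j"
  proof
    assume "Suc i < j"
    then have "cbox_t t (2 ^ i) \<subseteq> obox_t t (2 ^ (j - 1))"
      by (intro cbox_t_subset_obox_t power_strict_increasing) auto
    then show False using y \<open>Suc i < j\<close> Ann_subset_cbox_t[of t i] unfolding AnnCl_def by auto
  qed
  ultimately show ?thesis by linarith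
qed

lemma cube_meeting_cbox_t_subset:
  fixes z :: "nat \<Rightarrow> int^'d"
  assumes "0 \<le> h" "cube t h z \<inter> cbox_t t R \<noteq> {}"
  shows "cube t h z \<subseteq> cbox_t t (R + h)"
proof
  fix x assume x: "x \<in> cube t h z"
  obtain y where y: "y \<in> cube t h z" "y \<in> cbox_t t R" using assms(2) by blast
  have "\<bar>x s $ k\<bar> \<le> R + h" if "s < t" for s k
  proof -
    have "\<bar>y s $ k\<bar> \<le> R" using y(2) that unfolding cbox_t_def by blast
    then show ?thesis
      using mem_cubeD[OF x that, of k] mem_cubeD[OF y(1) that, of k] by (auto simp: abs_le_iff distrib_left)
  qed
  then show "x \<in> cbox_t t (R + h)" using x unfolding cube_def cbox_t_def by auto
qed

lemma sum_powr_le_sum_annuli: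
  fixes M :: "(nat \<Rightarrow> real^'d) measure"
  assumes "finite_measure M" "sets M = sets (PiM {..<t} (\<lambda>_. borel))" "finite F"
    and F: "\<And>G. G \<in> F \<Longrightarrow> G \<in> sets M \<and> G \<subseteq> cbox_t t (2 ^ J)"
    and "\<And>G. 0 \<le> w G" "0 \<le> a" "a < 1"
  shows "(\<Sum>G\<in>F. w G * measure M G powr (1 - a))
    \<le> (\<Sum>i\<le>J. \<Sum>G\<in>F. w G * measure M (G \<inter> Ann t i) powr (1 - a))"
proof -
  have "(\<Sum>G\<in>F. w G * measure M G powr (1 - a))
      \<le> (\<Sum>G\<in>F. w G * (\<Sum>i\<le>J. measure M (G \<inter> Ann t i) powr (1 - a)))"
  proof (intro sum_mono mult_left_mono)
    fix G assume "G \<in> F"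
    then have "measure M G = (\<Sum>i\<le>J. measure M (G \<inter> Ann t i))"
      using F measure_Int_cbox_t_pow2_eq_sum_Ann[OF assms(1,2)] by (metis inf.absorb1)
    then show "measure M G powr (1 - a) \<le> (\<Sum>i\<le>J. measure M (G \<inter> Ann t i) powr (1 - a))"
      using assms by (simp add: powr_sum_le_sum_powr)
  qed (use assms in auto)
  also have "\<dots> = (\<Sum>i\<le>J. \<Sum>G\<in>F. w G * measure M (G \<inter> Ann t i) powr (1 - a))"
    by (simp add: sum_distrib_left sum.swap[of _ F])
  finally show ?thesis .
qed

lemma finite_cubes_subset_cbox_t_pow2:
  assumes "finite F" "\<And>G. G \<in> F \<Longrightarrow> \<exists>h z. G = cube t h z"
  shows "\<exists>J. \<forall>G\<in>F. G \<subseteq> cbox_t t (2 ^ J)"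
proof -
  have "\<forall>G\<in>F. \<exists>J. G \<subseteq> cbox_t t (2 ^ J)"
    using assms(2) cube_subset_cbox_t_pow2 by blast
  then obtain J where J: "\<And>G. G \<in> F \<Longrightarrow> G \<subseteq> cbox_t t (2 ^ J G)"
    by metis
  have "G \<subseteq> cbox_t t (2 ^ (\<Sum>G\<in>F. J G))" if "G \<in> F" for G
  proof -
    have "J G \<le> (\<Sum>G\<in>F. J G)" using assms(1) that by (intro member_le_sum) auto
    then have "(2::real) ^ J G \<le> 2 ^ (\<Sum>G\<in>F. J G)" by (intro power_increasing) auto
    then show ?thesis using J[OF that] cbox_t_mono by blast
  qed
  then show ?thesis by blast
qed

lemma sum_weighted_powr_le_annuli_bound:
  fixes M :: "(nat \<Rightarrow> real^'d) measure" and F :: "(nat \<Rightarrow> real^'d) set set"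
  assumes "finite_measure M" "sets M = sets (PiM {..<t} (\<lambda>_. borel))" "0 \<le> a" "a < 1"
    and "finite F" "\<And>G. G \<in> F \<Longrightarrow> \<exists>h z. G = cube t h z" "\<And>G. 0 \<le> w G"
    and annulus: "\<And>i. (\<Sum>G\<in>{G\<in>F. G \<inter> Ann t i \<noteq> {}}. w G * measure M (G \<inter> Ann t i) powr (1 - a))
      \<le> K * (g i * measure M (Ann t i) powr (1 - a))"
  shows "\<exists>J. (\<Sum>G\<in>F. w G * measure M G powr (1 - a)) \<le> K * (\<Sum>i\<le>J. g i * measure M (Ann t i) powr (1 - a))"
proof -
  obtain J where J: "\<forall>G\<in>F. G \<subseteq> cbox_t t (2 ^ J)"
    using finite_cubes_subset_cbox_t_pow2 assms(5,6) by blast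
  have "(\<Sum>G\<in>F. w G * measure M G powr (1 - a))
      \<le> (\<Sum>i\<le>J. \<Sum>G\<in>F. w G * measure M (G \<inter> Ann t i) powr (1 - a))"
    using assms J sets_cube by (intro sum_powr_le_sum_annuli) fastforce+
  also have "\<dots> = (\<Sum>i\<le>J. \<Sum>G\<in>{G\<in>F. G \<inter> Ann t i \<noteq> {}}. w G * measure M (G \<inter> Ann t i) powr (1 - a))"
    using assms(5) by (intro sum.cong sum.mono_neutral_right) auto
  also have "\<dots> \<le> K * (\<Sum>i\<le>J. g i * measure M (Ann t i) powr (1 - a))"
    unfolding sum_distrib_left by (intro sum_mono annulus)
  finally show ?thesis by blast
qed

lemma sum_ennreal_le_mult_infsum:
  fixes f :: "'a \<Rightarrow> real" and g :: "nat \<Rightarrow> real"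
  assumes "\<And>x. 0 \<le> f x" "\<And>i. 0 \<le> g i" "0 \<le> K" "sum f F \<le> K * (\<Sum>i\<le>J. g i)"
  shows "(\<Sum>x\<in>F. ennreal (f x)) \<le> ennreal K * (\<Sum>\<^sub>\<infinity>i\<in>UNIV. ennreal (g i))"
proof -
  have "(\<Sum>x\<in>F. ennreal (f x)) \<le> ennreal K * (\<Sum>i\<le>J. ennreal (g i))"
    using assms by (simp add: sum_ennreal ennreal_leI sum_nonneg flip: ennreal_mult)
  also have "(\<Sum>i\<le>J. ennreal (g i)) = (\<Sum>\<^sub>\<infinity>i\<in>{..J}. ennreal (g i))"
    by simp
  also have "\<dots> \<le> (\<Sum>\<^sub>\<infinity>i\<in>UNIV. ennreal (g i))"
    by (intro infsum_mono_neutral) (auto intro: nonneg_summable_on_complete)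
  finally show ?thesis by (simp add: mult_left_mono)
qed

lemma infsum_weighted_powr_le_annuli:
  fixes M :: "(nat \<Rightarrow> real^'d) measure" and \<Phi> :: "(nat \<Rightarrow> real^'d) set set"
  assumes "finite_measure M" "sets M = sets (PiM {..<t} (\<lambda>_. borel))" "0 \<le> a" "a < 1"
    and cubes: "\<And>G. G \<in> \<Phi> \<Longrightarrow> \<exists>h z. G = cube t h z"
    and "\<And>G. 0 \<le> w G" "\<And>i. 0 \<le> g i" "0 \<le> K"
    and annulus: "\<And>F i. finite F \<Longrightarrow> F \<subseteq> \<Phi> \<Longrightarrow> (\<And>G. G \<in> F \<Longrightarrow> G \<inter> Ann t i \<noteq> {}) \<Longrightarrow>
        (\<Sum>G\<in>F. w G * measure M (G \<inter> Ann t i) powr (1 - a)) \<le> K * (g i * measure M (Ann t i) powr (1 - a))"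
  shows "(\<Sum>\<^sub>\<infinity>G\<in>\<Phi>. ennreal (w G * measure M G powr (1 - a)))
    \<le> ennreal K * (\<Sum>\<^sub>\<infinity>j\<in>UNIV. ennreal (g j * measure M (Ann t j) powr (1 - a)))"
proof (rule infsum_le_finite_sums)
  show "(\<lambda>G. ennreal (w G * measure M G powr (1 - a))) summable_on \<Phi>"
    by (rule nonneg_summable_on_complete) simp
  fix F assume F: "finite F" "F \<subseteq> \<Phi>"
  have "\<exists>J. (\<Sum>G\<in>F. w G * measure M G powr (1 - a)) \<le> K * (\<Sum>i\<le>J. g i * measure M (Ann t i) powr (1 - a))"
  proof (rule sum_weighted_powr_le_annuli_bound[OF assms(1-4) F(1) _ assms(6)])
    show "\<And>G. G \<in> F \<Longrightarrow> \<exists>h z. G = cube t h z" using F(2) cubes by blast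
    show "(\<Sum>G\<in>{G\<in>F. G \<inter> Ann t i \<noteq> {}}. w G * measure M (G \<inter> Ann t i) powr (1 - a))
        \<le> K * (g i * measure M (Ann t i) powr (1 - a))" for i
      using F by (intro annulus) auto
  qed
  then obtain J where J: "(\<Sum>G\<in>F. w G * measure M G powr (1 - a))
      \<le> K * (\<Sum>i\<le>J. g i * measure M (Ann t i) powr (1 - a))"
    by blast
  show "(\<Sum>G\<in>F. ennreal (w G * measure M G powr (1 - a)))
      \<le> ennreal K * (\<Sum>\<^sub>\<infinity>j\<in>UNIV. ennreal (g j * measure M (Ann t j) powr (1 - a)))"
    by (rule sum_ennreal_le_mult_infsum[OF _ _ _ J]) (use assms in auto)
qed

section \<open>The families hatPhi and checkPhi\<close>

lemma cube_meeting_Ann_subset_cbox_t: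
  fixes z :: "nat \<Rightarrow> int^'d"
  assumes "0 \<le> h" "h \<le> 1" "cube t h z \<inter> Ann t i \<noteq> {}"
  shows "cube t h z \<subseteq> cbox_t t (2 ^ Suc i)"
proof -
  have "cube t h z \<subseteq> cbox_t t (2 ^ i + h)"
    using assms Ann_subset_cbox_t[of t i] by (intro cube_meeting_cbox_t_subset) blast+
  also have "\<dots> \<subseteq> cbox_t t (2 ^ Suc i)"
  proof (rule cbox_t_mono)
    have "(1::real) \<le> 2 ^ i" by simp
    then show "2 ^ i + h \<le> 2 ^ Suc i" using \<open>h \<le> 1\<close> by (simp only: power_Suc)
  qed
  finally show ?thesis .
qed

lemma sum_hat_cubes_Int_Ann_le:
  fixes M :: "(nat \<Rightarrow> real^'d) measure" and F :: "(nat \<Rightarrow> real^'d) set set"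
  assumes "finite_measure M" "sets M = sets (PiM {..<t} (\<lambda>_. borel))"
    and "1 \<le> t" "1 \<le> m" "0 \<le> a" "a < 1" "0 \<le> r" "0 \<le> b" "0 \<le> c"
    and F: "finite F" "\<And>G. G \<in> F \<Longrightarrow> \<exists>z. G = cube t (1 / real m) z \<and> G \<inter> Ann t i \<noteq> {}"
  defines "D \<equiv> real t * real CARD('d)" and "e \<equiv> real CARD('d) * real t * a"
  shows "(\<Sum>G\<in>F. set_weight t r b c G * measure M (G \<inter> Ann t i) powr (1 - a))
    \<le> 2 powr b * (2 * D) powr (r * b) * (D + 1) powr c * 4 powr e * (2 ^ (CARD('d) * t)) powr (1 - a)
      * real m powr e * (2 powr (real i * (r * b + e)) * measure M (Ann t i) powr (1 - a))"
proof -
  define h where "h = 1 / real m"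
  have "0 < h" "h \<le> 1" using \<open>1 \<le> m\<close> unfolding h_def by auto
  have cubes: "\<And>G. G \<in> F \<Longrightarrow> \<exists>z. G = cube t h z \<and> G \<inter> Ann t i \<noteq> {}"
    unfolding h_def by (fact F(2))
  have "G \<subseteq> cbox_t t (2 ^ Suc i)" if G: "G \<in> F" for G
  proof -
    obtain z where "G = cube t h z" "G \<inter> Ann t i \<noteq> {}" using cubes[OF G] by blast
    then show ?thesis using cube_meeting_Ann_subset_cbox_t[of h t z i] \<open>0 < h\<close> \<open>h \<le> 1\<close> by simp
  qed
  then have "(\<Sum>G\<in>F. set_weight t r b c G * measure M (G \<inter> Ann t i) powr (1 - a))
      \<le> 2 powr b * (D * 2 ^ Suc i) powr (r * b) * (D * h + 1) powr c
        * ((2 * 2 ^ Suc i / h) powr e * (2 ^ (CARD('d) * t) * measure M (Ann t i)) powr (1 - a))"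
    using assms F(1) cubes \<open>0 < h\<close> sets_Ann one_le_power[of "2::real" "Suc i"] unfolding D_def e_def
    by (intro sum_weighted_cubes_in_cbox_t_le) (auto simp: mult.assoc)
  also have "\<dots> \<le> 2 powr b * ((2 * D) powr (r * b) * 2 powr (real i * (r * b))) * (D + 1) powr c
        * ((4 powr e * real m powr e * 2 powr (real i * e))
          * ((2 ^ (CARD('d) * t)) powr (1 - a) * measure M (Ann t i) powr (1 - a)))"
  proof -
    have "(D * 2 ^ Suc i) powr (r * b) = (2 * D) powr (r * b) * 2 powr (real i * (r * b))"
      unfolding D_def by (simp add: powr_mult realpow_powr mult.assoc)
    moreover have "(2 * 2 ^ Suc i / h) powr e = 4 powr e * real m powr e * 2 powr (real i * e)"
      using \<open>1 \<le> m\<close> unfolding h_def by (simp add: powr_mult realpow_powr mult_ac)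
    moreover have "(2 ^ (CARD('d) * t) * measure M (Ann t i)) powr (1 - a)
        = (2 ^ (CARD('d) * t)) powr (1 - a) * measure M (Ann t i) powr (1 - a)"
      by (simp add: powr_mult)
    moreover have "(D * h + 1) powr c \<le> (D + 1) powr c"
      using \<open>0 < h\<close> \<open>h \<le> 1\<close> \<open>0 \<le> c\<close> unfolding D_def
      by (intro powr_mono2) (auto intro: mult_left_le)
    ultimately show ?thesis by (intro mult_mono mult_right_mono mult_left_mono) auto
  qed
  also have "\<dots> = 2 powr b * (2 * D) powr (r * b) * (D + 1) powr c * 4 powr e * (2 ^ (CARD('d) * t)) powr (1 - a)
      * real m powr e * (2 powr (real i * (r * b + e)) * measure M (Ann t i) powr (1 - a))"
    by (simp add: distrib_left powr_add mult_ac)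
  finally show ?thesis .
qed

lemma mult_add_one_powr_le:
  fixes D h c :: real
  assumes "0 \<le> D" "0 \<le> h" "h \<le> 2 ^ j" "0 \<le> c"
  shows "(D * h + 1) powr c \<le> (D + 1) powr c * 2 powr (real j * c)"
proof -
  have "D * h + 1 \<le> (D + 1) * 2 ^ j"
    using assms one_le_power[of "2::real" j] by (simp add: distrib_right mult_left_mono add_mono)
  then have "(D * h + 1) powr c \<le> ((D + 1) * 2 ^ j) powr c"
    using assms by (intro powr_mono2) auto
  also have "\<dots> = (D + 1) powr c * 2 powr (real j * c)"
    using assms by (simp add: powr_mult realpow_powr)
  finally show ?thesis .
qed

definition check_layer :: "nat \<Rightarrow> nat \<Rightarrow> nat \<Rightarrow> (nat \<Rightarrow> real^'d) set set" where
  "check_layer t m j = {cube t (2 ^ j / 2 / real m) z | z. cube t (2 ^ j / 2 / real m) z \<subseteq> AnnCl t j}"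

lemma checkPhi_eq_UN_check_layer:
  "(checkPhi T N t :: (nat \<Rightarrow> real^'d) set set) = (\<Union>j. check_layer t (gridm CARD('d) T N) j)"
  unfolding checkPhi_def check_layer_def by simp

lemma check_layer_meets_AnnD:
  fixes G :: "(nat \<Rightarrow> real^'d) set"
  assumes "G \<in> check_layer t m j" "G \<inter> Ann t i \<noteq> {}"
  shows "j = i \<or> j = Suc i"
proof (rule Ann_Int_AnnCl_nonemptyD)
  have "G \<subseteq> AnnCl t j" using assms(1) unfolding check_layer_def by auto
  then show "Ann t i \<inter> (AnnCl t j :: (nat \<Rightarrow> real^'d) set) \<noteq> {}" using assms(2) by auto
qed

lemma sum_check_layer_Int_le:
  fixes M :: "(nat \<Rightarrow> real^'d) measure" and F :: "(nat \<Rightarrow> real^'d) set set"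
  assumes "finite_measure M" "sets M = sets (PiM {..<t} (\<lambda>_. borel))"
    and "1 \<le> t" "1 \<le> m" "0 \<le> a" "a < 1" "0 \<le> r" "0 \<le> b" "0 \<le> c"
    and F: "finite F" "F \<subseteq> check_layer t m j" and "A \<in> sets M"
  defines "D \<equiv> real t * real CARD('d)" and "e \<equiv> real CARD('d) * real t * a"
  shows "(\<Sum>G\<in>F. set_weight t r b c G * measure M (G \<inter> A) powr (1 - a))
    \<le> 2 powr b * D powr (r * b) * (D + 1) powr c * 4 powr e * (2 ^ (CARD('d) * t)) powr (1 - a)
      * real m powr e * (2 powr (real j * (r * b + c)) * measure M A powr (1 - a))"
proof -
  define h where "h = 2 ^ j / 2 / real m"
  have "0 < h" "h \<le> 2 ^ j" using \<open>1 \<le> m\<close> unfolding h_def by (auto simp: field_simps)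
  have cubes: "\<And>G. G \<in> F \<Longrightarrow> \<exists>z. G = cube t h z \<and> G \<subseteq> cbox_t t (2 ^ j)"
    using F(2) AnnCl_subset_cbox_t unfolding h_def check_layer_def by blast
  have "(\<Sum>G\<in>F. set_weight t r b c G * measure M (G \<inter> A) powr (1 - a))
      \<le> 2 powr b * (D * 2 ^ j) powr (r * b) * (D * h + 1) powr c
        * ((2 * 2 ^ j / h) powr e * (2 ^ (CARD('d) * t) * measure M A) powr (1 - a))"
    using assms F(1) cubes \<open>0 < h\<close> one_le_power[of "2::real" j] unfolding D_def e_def
    by (intro sum_weighted_cubes_in_cbox_t_le) (auto simp: mult.assoc)
  also have "\<dots> \<le> 2 powr b * (D powr (r * b) * 2 powr (real j * (r * b))) * ((D + 1) powr c * 2 powr (real j * c))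
        * ((4 powr e * real m powr e) * ((2 ^ (CARD('d) * t)) powr (1 - a) * measure M A powr (1 - a)))"
  proof -
    have "(D * 2 ^ j) powr (r * b) = D powr (r * b) * 2 powr (real j * (r * b))"
      unfolding D_def by (simp add: powr_mult realpow_powr)
    moreover have "(2 * 2 ^ j / h) powr e = 4 powr e * real m powr e"
      using \<open>1 \<le> m\<close> unfolding h_def by (simp add: powr_mult)
    moreover have "(2 ^ (CARD('d) * t) * measure M A) powr (1 - a)
        = (2 ^ (CARD('d) * t)) powr (1 - a) * measure M A powr (1 - a)"
      by (simp add: powr_mult)
    moreover have "(D * h + 1) powr c \<le> (D + 1) powr c * 2 powr (real j * c)"
      using \<open>0 < h\<close> \<open>h \<le> 2 ^ j\<close> \<open>0 \<le> c\<close> unfolding D_def by (intro mult_add_one_powr_le) auto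
    ultimately show ?thesis by (intro mult_mono mult_right_mono mult_left_mono) auto
  qed
  also have "\<dots> = 2 powr b * D powr (r * b) * (D + 1) powr c * 4 powr e * (2 ^ (CARD('d) * t)) powr (1 - a)
      * real m powr e * (2 powr (real j * (r * b + c)) * measure M A powr (1 - a))"
    by (simp add: distrib_left powr_add mult_ac)
  finally show ?thesis .
qed

lemma sum_check_cubes_Int_Ann_le:
  fixes M :: "(nat \<Rightarrow> real^'d) measure" and F :: "(nat \<Rightarrow> real^'d) set set"
  assumes "finite_measure M" "sets M = sets (PiM {..<t} (\<lambda>_. borel))"
    and "1 \<le> t" "1 \<le> m" "0 \<le> a" "a < 1" "0 \<le> r" "0 \<le> b" "0 \<le> c"
    and F: "finite F" "F \<subseteq> (\<Union>j. check_layer t m j)" "\<And>G. G \<in> F \<Longrightarrow> G \<inter> Ann t i \<noteq> {}"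
  defines "D \<equiv> real t * real CARD('d)" and "e \<equiv> real CARD('d) * real t * a"
  shows "(\<Sum>G\<in>F. set_weight t r b c G * measure M (G \<inter> Ann t i) powr (1 - a))
    \<le> 2 * (2 powr b * D powr (r * b) * (D + 1) powr c * 2 powr (r * b + c) * 4 powr e * (2 ^ (CARD('d) * t)) powr (1 - a))
      * real m powr e * (2 powr (real i * (r * b + c)) * measure M (Ann t i) powr (1 - a))"
proof -
  define B where "B = 2 powr b * D powr (r * b) * (D + 1) powr c * 4 powr e * (2 ^ (CARD('d) * t)) powr (1 - a)
      * real m powr e * (2 powr (r * b + c) * 2 powr (real i * (r * b + c)) * measure M (Ann t i) powr (1 - a))"
  let ?S = "\<lambda>F. \<Sum>G\<in>F. set_weight t r b c G * measure M (G \<inter> Ann t i) powr (1 - a)"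
  have layer: "?S F' \<le> B" if "F' \<subseteq> F" "F' \<subseteq> check_layer t m j" "j \<le> Suc i" for F' j
  proof -
    have "real j * (r * b + c) \<le> (1 + real i) * (r * b + c)"
      using \<open>j \<le> Suc i\<close> assms by (intro mult_right_mono) auto
    then have "2 powr (real j * (r * b + c)) \<le> 2 powr (r * b + c) * 2 powr (real i * (r * b + c))"
      by (simp add: distrib_right powr_add[symmetric])
    then have "?S F' \<le> 2 powr b * D powr (r * b) * (D + 1) powr c * 4 powr e * (2 ^ (CARD('d) * t)) powr (1 - a)
      * real m powr e * (2 powr (real j * (r * b + c)) * measure M (Ann t i) powr (1 - a))"
      using finite_subset[OF that(1) F(1)] that(2) sets_Ann assms unfolding D_def e_def
      by (intro sum_check_layer_Int_le) auto
    also have "\<dots> \<le> B"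
      using \<open>2 powr (real j * (r * b + c)) \<le> _\<close> unfolding B_def
      by (intro mult_left_mono mult_right_mono) auto
    finally show ?thesis .
  qed
  have "F - check_layer t m i \<subseteq> check_layer t m (Suc i)"
  proof
    fix G assume G: "G \<in> F - check_layer t m i"
    then obtain j where j: "G \<in> check_layer t m j" using F(2) by blast
    then have "j = i \<or> j = Suc i" using F(3) G by (intro check_layer_meets_AnnD) auto
    then show "G \<in> check_layer t m (Suc i)" using G j by blast
  qed
  have "?S F = ?S (F \<inter> check_layer t m i) + ?S (F - check_layer t m i)"
    using F(1) by (rule sum.Int_Diff)
  also have "\<dots> \<le> B + B"
    using \<open>F - check_layer t m i \<subseteq> check_layer t m (Suc i)\<close> by (intro add_mono layer) auto
  also have "\<dots> = 2 * (2 powr b * D powr (r * b) * (D + 1) powr c * 2 powr (r * b + c) * 4 powr e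
      * (2 ^ (CARD('d) * t)) powr (1 - a)) * real m powr e * (2 powr (real i * (r * b + c))
      * measure M (Ann t i) powr (1 - a))"
    unfolding B_def by (simp add: algebra_simps)
  finally show ?thesis .
qed

lemma infsum_hat_cubes_le:
  fixes M :: "(nat \<Rightarrow> real^'d) measure"
  assumes "finite_measure M" "sets M = sets (PiM {..<t} (\<lambda>_. borel))"
    and "1 \<le> t" "0 \<le> a" "a < 1" "0 \<le> r" "0 \<le> b" "0 \<le> c"
  shows "\<exists>C>0. \<forall>m::nat. 1 \<le> m \<longrightarrow>
    (\<Sum>\<^sub>\<infinity>G\<in>{cube t (1 / real m) z | z. True}. ennreal (set_weight t r b c G * measure M G powr (1 - a)))
      \<le> ennreal (C * real m powr (real CARD('d) * real t * a))
        * (\<Sum>\<^sub>\<infinity>j\<in>UNIV. ennreal (2 powr (real j * (r * b + real CARD('d) * real t * a)) * measure M (Ann t j) powr (1 - a)))"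
proof -
  define D where "D = real t * real CARD('d)"
  define C where "C = 2 powr b * (2 * D) powr (r * b) * (D + 1) powr c * 4 powr (real CARD('d) * real t * a)
    * (2 ^ (CARD('d) * t)) powr (1 - a)"
  have "0 < D" using \<open>1 \<le> t\<close> unfolding D_def by simp
  then have "0 < C" unfolding C_def by simp
  moreover have cubes: "\<And>G. G \<in> {cube t (1 / real m) z | z. True} \<Longrightarrow> \<exists>h z. G = cube t h z" for m
    by blast
  ultimately show ?thesis
    using sum_hat_cubes_Int_Ann_le[OF assms(1-3) _ assms(4-8)]
    by (intro exI[of _ C] conjI allI impI infsum_weighted_powr_le_annuli[OF assms(1,2,4,5) cubes] set_weight_nonneg)
      (auto simp: subset_eq C_def D_def)
qed

lemma infsum_check_cubes_le:
  fixes M :: "(nat \<Rightarrow> real^'d) measure"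
  assumes "finite_measure M" "sets M = sets (PiM {..<t} (\<lambda>_. borel))"
    and "1 \<le> t" "0 \<le> a" "a < 1" "0 \<le> r" "0 \<le> b" "0 \<le> c"
  shows "\<exists>C>0. \<forall>m::nat. 1 \<le> m \<longrightarrow>
    (\<Sum>\<^sub>\<infinity>G\<in>(\<Union>j. check_layer t m j). ennreal (set_weight t r b c G * measure M G powr (1 - a)))
      \<le> ennreal (C * real m powr (real CARD('d) * real t * a))
        * (\<Sum>\<^sub>\<infinity>j\<in>UNIV. ennreal (2 powr (real j * (r * b + c)) * measure M (Ann t j) powr (1 - a)))"
proof -
  define D where "D = real t * real CARD('d)"
  define C where "C = 2 * (2 powr b * D powr (r * b) * (D + 1) powr c * 2 powr (r * b + c)
    * 4 powr (real CARD('d) * real t * a) * (2 ^ (CARD('d) * t)) powr (1 - a))"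
  have "0 < D" using \<open>1 \<le> t\<close> unfolding D_def by simp
  then have "0 < C" unfolding C_def by simp
  moreover have cubes: "\<And>G. G \<in> (\<Union>j. check_layer t m j) \<Longrightarrow> \<exists>h z. G = cube t h z" for m
    unfolding check_layer_def by blast
  ultimately show ?thesis
    using sum_check_cubes_Int_Ann_le[OF assms(1-3) _ assms(4-8)]
    by (intro exI[of _ C] conjI allI impI infsum_weighted_powr_le_annuli[OF assms(1,2,4,5) cubes] set_weight_nonneg)
      (auto simp: C_def D_def)
qed

section \<open>Grid size and the main theorem\<close>

lemma gridm_bounds:
  assumes "1 \<le> N" "0 < d * T"
  shows "1 \<le> gridm d T N" and "real (gridm d T N) \<le> 2 * real N powr (1 / real (d * T))"
proof -
  define q where "q = real N powr (1 / real (d * T))"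
  have "1 \<le> q" unfolding q_def using assms by (intro ge_one_powr_ge_zero) auto
  moreover have "1 / DeltaN d T N = q"
    unfolding DeltaN_def q_def using assms(1) by (simp add: powr_minus divide_inverse)
  ultimately have "gridm d T N = nat \<lceil>q\<rceil>" "1 \<le> \<lceil>q\<rceil>"
    unfolding gridm_def by auto
  with \<open>1 \<le> q\<close> show "1 \<le> gridm d T N" "real (gridm d T N) \<le> 2 * q"
    by linarith+
qed

lemma gridm_powr_le:
  assumes "1 \<le> N" "0 < d * T" "0 \<le> e"
  shows "real (gridm d T N) powr e \<le> 2 powr e * real N powr (e / real (d * T))"
proof -
  have "real (gridm d T N) powr e \<le> (2 * real N powr (1 / real (d * T))) powr e"
    using gridm_bounds[OF assms(1,2)] assms(3) by (intro powr_mono2) auto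
  also have "\<dots> = 2 powr e * real N powr (e / real (d * T))"
    by (simp add: powr_mult powr_powr)
  finally show ?thesis .
qed

lemma le_ennreal_mult_right_trans:
  "L \<le> ennreal x * R \<Longrightarrow> x \<le> y \<Longrightarrow> L \<le> ennreal y * R"
  by (meson ennreal_leI mult_right_mono order_trans zero_le)

lemma infsum_hatPhi_checkPhi_le:
  fixes M :: "(nat \<Rightarrow> real^'d) measure"
  assumes "finite_measure M" "sets M = sets (PiM {..<t} (\<lambda>_. borel))"
    and "1 \<le> t" "1 \<le> T" "0 \<le> a" "a < 1" "0 \<le> r" "0 \<le> b" "0 \<le> c"
  shows "\<exists>C>0. \<forall>N::nat. 1 \<le> N \<longrightarrow>
    (\<Sum>\<^sub>\<infinity>G\<in>(hatPhi T N t :: (nat \<Rightarrow> real^'d) set set). ennreal (set_weight t r b c G * measure M G powr (1 - a)))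
      \<le> ennreal (C * real N powr (real t * a / real T))
        * (\<Sum>\<^sub>\<infinity>j\<in>UNIV. ennreal (2 powr (real j * (r * b + real CARD('d) * real t * a)) * measure M (Ann t j) powr (1 - a)))
    \<and> (\<Sum>\<^sub>\<infinity>G\<in>(checkPhi T N t :: (nat \<Rightarrow> real^'d) set set). ennreal (set_weight t r b c G * measure M G powr (1 - a)))
      \<le> ennreal (C * real N powr (real t * a / real T))
        * (\<Sum>\<^sub>\<infinity>j\<in>UNIV. ennreal (2 powr (real j * (r * b + c)) * measure M (Ann t j) powr (1 - a)))"
proof -
  let ?w = "\<lambda>G. ennreal (set_weight t r b c G * measure M G powr (1 - a))"
  let ?x = "\<lambda>N::nat. real N powr (real t * a / real T)"
  let ?R\<^sub>1 = "\<Sum>\<^sub>\<infinity>j\<in>UNIV. ennreal (2 powr (real j * (r * b + real CARD('d) * real t * a)) * measure M (Ann t j) powr (1 - a))"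
  let ?R\<^sub>2 = "\<Sum>\<^sub>\<infinity>j\<in>UNIV. ennreal (2 powr (real j * (r * b + c)) * measure M (Ann t j) powr (1 - a))"
  define e where "e = real CARD('d) * real t * a"
  obtain C\<^sub>1 where "0 < C\<^sub>1"
    and hat: "\<forall>m::nat. 1 \<le> m \<longrightarrow> (\<Sum>\<^sub>\<infinity>G\<in>{cube t (1 / real m) z | z. True}. ?w G) \<le> ennreal (C\<^sub>1 * real m powr e) * ?R\<^sub>1"
    using infsum_hat_cubes_le[OF assms(1-3,5-9)] unfolding e_def by blast
  obtain C\<^sub>2 where "0 < C\<^sub>2"
    and check: "\<forall>m::nat. 1 \<le> m \<longrightarrow> (\<Sum>\<^sub>\<infinity>G\<in>(\<Union>j. check_layer t m j). ?w G) \<le> ennreal (C\<^sub>2 * real m powr e) * ?R\<^sub>2"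
    using infsum_check_cubes_le[OF assms(1-3,5-9)] unfolding e_def by blast
  define C where "C = 2 powr e * (C\<^sub>1 + C\<^sub>2)"
  have "0 < C" using \<open>0 < C\<^sub>1\<close> \<open>0 < C\<^sub>2\<close> unfolding C_def by simp
  have scale: "C' * real (gridm CARD('d) T N) powr e \<le> C * ?x N"
    if "1 \<le> N" "0 \<le> C'" "C' \<le> C\<^sub>1 + C\<^sub>2" for N C'
  proof -
    have "e / real (CARD('d) * T) = real t * a / real T"
      using assms(4) unfolding e_def by simp
    then have "C' * real (gridm CARD('d) T N) powr e \<le> C' * (2 powr e * ?x N)"
      using gridm_powr_le[OF \<open>1 \<le> N\<close>, of "CARD('d)" T e] assms that
      unfolding e_def by (intro mult_left_mono) auto
    also have "\<dots> \<le> C * ?x N"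
      using that unfolding C_def by (simp add: mult_right_mono)
    finally show ?thesis .
  qed
  show ?thesis
  proof (intro exI[of _ C] conjI allI impI \<open>0 < C\<close>)
    fix N :: nat assume "1 \<le> N"
    then have m: "1 \<le> gridm CARD('d) T N" using gridm_bounds(1) assms(4) by simp
    show "(\<Sum>\<^sub>\<infinity>G\<in>(hatPhi T N t :: (nat \<Rightarrow> real^'d) set set). ?w G) \<le> ennreal (C * ?x N) * ?R\<^sub>1"
      unfolding hatPhi_def using hat[rule_format, OF m] scale[OF \<open>1 \<le> N\<close>, of C\<^sub>1] \<open>0 < C\<^sub>1\<close> \<open>0 < C\<^sub>2\<close>
      by (elim le_ennreal_mult_right_trans) simp_all
    show "(\<Sum>\<^sub>\<infinity>G\<in>(checkPhi T N t :: (nat \<Rightarrow> real^'d) set set). ?w G) \<le> ennreal (C * ?x N) * ?R\<^sub>2"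
      unfolding checkPhi_eq_UN_check_layer using check[rule_format, OF m] scale[OF \<open>1 \<le> N\<close>, of C\<^sub>2] \<open>0 < C\<^sub>1\<close> \<open>0 < C\<^sub>2\<close>
      by (elim le_ennreal_mult_right_trans) simp_all
  qed
qed

lemma finite_uniform_constant:
  fixes P :: "nat \<Rightarrow> 'i \<Rightarrow> real \<Rightarrow> bool"
  assumes "finite I"
    and "\<And>i. i \<in> I \<Longrightarrow> \<exists>C>0. \<forall>N\<ge>1. P N i C"
    and "\<And>N i C C'. i \<in> I \<Longrightarrow> P N i C \<Longrightarrow> C \<le> C' \<Longrightarrow> P N i C'"
  shows "\<exists>C. C > 0 \<and> (\<forall>N. N \<ge> 1 \<longrightarrow> (\<forall>i\<in>I. P N i C))"
proof -
  obtain C where C: "\<And>i. i \<in> I \<Longrightarrow> 0 < C i \<and> (\<forall>N\<ge>1. P N i (C i))"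
    using assms(2) by metis
  have nonneg: "0 \<le> C i" if "i \<in> I" for i
    using C[OF that] by simp
  have "C i \<le> 1 + sum C I" if "i \<in> I" for i
    using member_le_sum[of i I C] that nonneg assms(1) by simp
  moreover have "0 < 1 + sum C I"
    using nonneg sum_nonneg[of I C] by (simp add: add_pos_nonneg)
  ultimately show ?thesis
    using C assms(3) by blast
qed

lemma finite_measure_restrict_distr:
  fixes M :: "(nat \<Rightarrow> 'a::topological_space) measure"
  assumes "prob_space M" "sets M = sets (PiM {..<T} (\<lambda>_. borel))" "t \<le> T"
  shows "finite_measure (distr M (PiM {..<t} (\<lambda>_. borel)) (\<lambda>x. restrict x {..<t}))"
proof -
  have "(\<lambda>x. restrict x {..<t}) \<in> measurable (PiM {..<T} (\<lambda>_. borel)) (PiM {..<t} (\<lambda>_. borel))"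
    using assms(3) by (intro measurable_restrict_subset) auto
  then have "(\<lambda>x. restrict x {..<t}) \<in> measurable M (PiM {..<t} (\<lambda>_. borel))"
    unfolding measurable_cong_sets[OF assms(2) refl] .
  then have "prob_space (distr M (PiM {..<t} (\<lambda>_. borel)) (\<lambda>x. restrict x {..<t}))"
    by (rule prob_space.prob_space_distr[OF assms(1)])
  then show ?thesis by (rule prob_space.finite_measure)
qed

theorem mainTheorem7:
  fixes \<mu> :: "(nat \<Rightarrow> real^'d) measure" and T :: nat and a b c r :: real
  assumes "T \<ge> 2"
    and "prob_space \<mu>"
    and "sets \<mu> = sets (PiM {..<T} (\<lambda>_. (borel :: (real^'d) measure)))"
    and "0 \<le> a" and "a < 1" and "b > 0" and "c > 0" and "r \<ge> 0"
  shows "\<exists>C::real. C > 0 \<and> (\<forall>N::nat. N \<ge> 1 \<longrightarrow> (\<forall>t\<in>{1..T-1}.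
     (\<Sum>\<^sub>\<infinity>G\<in>(hatPhi T N t :: (nat \<Rightarrow> real^'d) set set).
         ennreal ((setnorm t G powr r + 1) powr b * (setdiam t G + 1) powr c * marg \<mu> t G powr (1 - a)))
       \<le> ennreal (C * real N powr (real t * a / real T)) *
         (\<Sum>\<^sub>\<infinity>j\<in>(UNIV::nat set).
            ennreal (2 powr (real j * (r * b + real CARD('d) * real t * a)) * marg \<mu> t (Ann t j) powr (1 - a)))
     \<and>
     (\<Sum>\<^sub>\<infinity>G\<in>(checkPhi T N t :: (nat \<Rightarrow> real^'d) set set).
         ennreal ((setnorm t G powr r + 1) powr b * (setdiam t G + 1) powr c * marg \<mu> t G powr (1 - a)))
       \<le> ennreal (C * real N powr (real t * a / real T)) *
         (\<Sum>\<^sub>\<infinity>j\<in>(UNIV::nat set).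
            ennreal (2 powr (real j * (r * b + c)) * marg \<mu> t (Ann t j :: (nat \<Rightarrow> real^'d) set) powr (1 - a)))))"
proof -
  have marginal: "finite_measure (distr \<mu> (PiM {..<t} (\<lambda>_. borel)) (\<lambda>x. restrict x {..<t}))"
    if "t \<le> T" for t
    using assms(2,3) that by (rule finite_measure_restrict_distr)
  show ?thesis
    unfolding marg_def set_weight_def[symmetric]
    apply (rule finite_uniform_constant)
    subgoal by simp
    subgoal for t using assms by (intro infsum_hatPhi_checkPhi_le marginal) auto
    subgoal by (meson le_ennreal_mult_right_trans mult_right_mono powr_ge_zero)
    done
qed

end
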